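(* Let $\mathcal{D}\subset\mathbb{R}^n$ be a parameter set, let $X$ and $Y$ be finite-dimensional real Hilbert spaces with norms $\|\cdot\|_X$, $\|\cdot\|_Y$, and for each $\mu\in\mathcal{D}$ let $m(\cdot,\cdot;\mu):X\times X\to\mathbb{R}$, $a(\cdot,\cdot;\mu):X\times X\to\mathbb{R}$, $b(\cdot,\cdot;\mu):X\times Y\to\mathbb{R}$ be bilinear forms such that $m(\cdot,\cdot;\mu)$ is symmetric with $m(v,v;\mu)>0$ for all $0\neq v\in X$, $a(\cdot,\cdot;\mu)$ is symmetric, and \[ \gamma_m(\mu)=\sup_{u\in X}\sup_{v\in X}\frac{m(u,v;\mu)}{\|u\|_X\|v\|_X}<\infty,\quad \gamma_a(\mu)=\sup_{u\in X}\sup_{v\in X}\frac{a(u,v;\mu)}{\|u\|_X\|v\|_X}<\infty, \] \[ \alpha_a(\mu)=\inf_{v\in X}\frac{a(v,v;\mu)}{\|v\|_X^2}>0,\qquad \beta(\mu)=\inf_{q\in Y}\sup_{v\in X}\frac{b(v,q;\mu)}{\|q\|_Y\|v\|_X}>0 . \] Let $K\in\mathbb{N}$, $\Delta t>0$, $\mathbb{K}=\{1,\dots,K\}$, and for each $k\in\mathbb{K}$ and $\mu\in\mathcal{D}$ let $f^k(\cdot;\mu)\in X'$, $g^k(\cdot;\mu)\in Y'$. Let the truth solution $u^k(\mu)\in X$, $p^k(\mu)\in Y$, $k\in\mathbb{K}$, be defined by $u^0(\mu)=0$ and, for $k\in\mathbb{K}$, \[ \tfrac{1}{\Delta t}m(u^k(\mu)-u^{k-1}(\mu),v;\mu)+a(u^k(\mu),v;\mu)+b(v,p^k(\mu);\mu)=f^k(v;\mu)\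 \ \forall v\in X,\qquad b(u^k(\mu),q;\mu)=g^k(q;\mu)\ \ \forall q\in Y. \] Let $X_N\subset X$, $Y_N\subset Y$, $N\in\{1,\dots,N_{\max}\}$, be subspaces such that for every $\mu\in\mathcal{D}$ there exist $u^k_N(\mu)\in X_N$, $p^k_N(\mu)\in Y_N$, $k\in\mathbb{K}$, with $u^0_N(\mu)=0$ and, for $k\in\mathbb{K}$, \[ \tfrac{1}{\Delta t}m(u^k_N(\mu)-u^{k-1}_N(\mu),v_N;\mu)+a(u^k_N(\mu),v_N;\mu)+b(v_N,p^k_N(\mu);\mu)=f^k(v_N;\mu)\ \ \forall v_N\in X_N, \] \[ b(u^k_N(\mu),q_N;\mu)=g^k(q_N;\mu)\ \ \forall q_N\in Y_N. \] Define the residuals $r^{1,k}_N(v;\mu)=f^k(v;\mu)-\tfrac{1}{\Delta t}m(u^k_N(\mu)-u^{k-1}_N(\mu),v;\mu)-a(u^k_N(\mu),v;\mu)-b(v,p^k_N(\mu);\mu)$ for $v\in X$ and $r^{2,k}_N(q;\mu)=g^k(q;\mu)-b(u^k_N(\mu),q;\mu)$ for $q\in Y$, and the errors $e^{u,k}_N(\mu)=u^k(\mu)-u^k_N(\mu)$. Let $\mu\in\mathcal{D}$, $N\in\{1,\dots,N_{\max}\}$, $k\in\mathbb{K}$, and let $\alpha_a^{\rm LB}(\mu),\gamma_a^{\rm UB}(\mu),\beta^{\rm LB}(\mu),\gamma_m^{\rm UB}(\mu)$ be positive numbers with $\alpha_a^{\rm LB}(\mu)\le\alpha_a(\mu)$,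 $\gamma_a(\mu)\le\gamma_a^{\rm UB}(\mu)$, $\beta^{\rm LB}(\mu)\le\beta(\mu)$, $\gamma_m(\mu)\le\gamma_m^{\rm UB}(\mu)$. Define \[ \Delta^{{\rm sym},k}_N(\mu)=\Bigg[\Delta t\sum_{j=1}^k\frac{\|r^{1,j}_N(\cdot;\mu)\|^2_{X'}}{\alpha_a^{\rm LB}(\mu)}+\frac{2}{\beta^{\rm LB}(\mu)}\Big(1+\sqrt{\frac{\gamma_a^{\rm UB}(\mu)}{\alpha_a^{\rm LB}(\mu)}}\Big)\|r^{1,j}_N(\cdot;\mu)\|_{X'}\|r^{2,j}_N(\cdot;\mu)\|_{Y'} \] \[ +\Big(\frac{\gamma_m^{\rm UB}(\mu)}{\Delta t}+\gamma_a^{\rm UB}(\mu)\Big)\frac{\|r^{2,j}_N(\cdot;\mu)\|^2_{Y'}}{(\beta^{\rm LB}(\mu))^2}\Bigg]^{1/2}. \] Then \[ \Big(\|e^{u,k}_N(\mu)\|_\mu^2+\Delta t\sum_{j=1}^k\|e^{u,j}_N(\mu)\|^2_{X,\mu}\Big)^{1/2}\le\Delta^{{\rm sym},k}_N(\mu). \]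
   Context: Here $\|v\|_\mu=\sqrt{m(v,v;\mu)}$ and $\|v\|_{X,\mu}=\sqrt{a(v,v;\mu)}$ for $v\in X$; $X'$, $Y'$ are the dual spaces with dual norms $\|r\|_{X'}=\sup_{0\ne v\in X}r(v)/\|v\|_X$ and $\|r\|_{Y'}=\sup_{0\ne q\in Y}r(q)/\|q\|_Y$. In the sum defining $\Delta^{{\rm sym},k}_N(\mu)$, all three terms are inside the sum over $j$ and multiplied by $\Delta t$. *)

theory Defs
  imports "HOL-Analysis.Analysis"
begin

definition cont_const :: "('x::real_normed_vector \<Rightarrow> 'x \<Rightarrow> real) \<Rightarrow> real" where
  "cont_const m = Sup {m u v / (norm u * norm v) | u v. u \<noteq> 0 \<and> v \<noteq> 0}"

definition coerc_const :: "('x::real_normed_vector \<Rightarrow> 'x \<Rightarrow> real) \<Rightarrow> real" where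
  "coerc_const a = Inf {a v v / (norm v)\<^sup>2 | v. v \<noteq> 0}"

definition infsup_const :: "('x::real_normed_vector \<Rightarrow> 'y::real_normed_vector \<Rightarrow> real) \<Rightarrow> real" where
  "infsup_const b = Inf {Sup {b v q / (norm q * norm v) | v. v \<noteq> 0} | q. q \<noteq> 0}"

definition dual_norm :: "('x::real_normed_vector \<Rightarrow> real) \<Rightarrow> real" where
  "dual_norm r = Sup {r v / norm v | v. v \<noteq> 0}"

end

theory Submission
  imports Defs
begin

text \<open>Write e(j) for the velocity error at step j. It satisfies the truth equations with the
  residuals r1(j), r2(j) as right-hand sides. The inf-sup condition provides w with b(w,-) = r2(j)
  and \<beta> |w| \<le> |r2(j)|; testing the momentum error equation with e(j) - w eliminates the pressure
  error. Symmetry of m and a, coercivity of a and Young's inequality then give the one-step bound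
  m(e(j),e(j)) - m(e(j-1),e(j-1)) + \<Delta>t a(e(j),e(j)) \<le> \<Delta>t |r1(j)|^2/\<alpha> + (\<gamma>m + \<Delta>t \<gamma>a) |r2(j)|^2/\<beta>^2,
  which telescopes from e(0) = 0.\<close>

lemma dual_norm_upper:
  fixes r :: "'x::euclidean_space \<Rightarrow> real"
  assumes "linear r"
  shows "r v \<le> dual_norm r * norm v"
proof (cases "v = 0")
  case True
  then show ?thesis using linear_0[OF assms] by simp
next
  case False
  obtain B where B: "\<And>x. norm (r x) \<le> B * norm x"
    using linear_bounded_pos[OF assms] by metis
  have "bdd_above {r v / norm v | v. v \<noteq> 0}"
    using B by (intro bdd_aboveI[of _ B]) (auto simp: divide_le_eq abs_le_iff)
  then have "r v / norm v \<le> dual_norm r"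
    unfolding dual_norm_def by (rule cSup_upper[rotated]) (use False in blast)
  with False show ?thesis by (simp add: divide_le_eq mult.commute)
qed

lemma dual_norm_nonneg:
  fixes r :: "'x::euclidean_space \<Rightarrow> real"
  assumes "linear r"
  shows "0 \<le> dual_norm r"
proof -
  define w :: 'x where "w = (SOME i. i \<in> Basis)"
  have "norm w = 1" unfolding w_def by (simp add: SOME_Basis)
  moreover have "r w \<le> dual_norm r * norm w" "r (- w) \<le> dual_norm r * norm (- w)"
    using dual_norm_upper[OF assms] by blast+
  ultimately show ?thesis using linear_neg[OF assms, of w] by simp
qed

lemma coerc_const_le:
  fixes a :: "'x::euclidean_space \<Rightarrow> 'x \<Rightarrow> real"
  assumes "bilinear a" and "\<alpha> \<le> coerc_const a"
  shows "\<alpha> * (norm v)\<^sup>2 \<le> a v v"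
proof (cases "v = 0")
  case True
  then show ?thesis using bilinear_lzero[OF assms(1)] by simp
next
  case False
  obtain B where B: "\<And>x y. norm (a x y) \<le> B * norm x * norm y"
    using bilinear_bounded[OF assms(1)] by blast
  have "bdd_below {a v v / (norm v)\<^sup>2 | v. v \<noteq> 0}"
  proof (rule bdd_belowI[of _ "- B"], clarify)
    fix v :: 'x assume "v \<noteq> 0"
    moreover have "- a v v \<le> B * (norm v)\<^sup>2"
      using B[of v v] by (auto simp: power2_eq_square abs_le_iff)
    ultimately show "- B \<le> a v v / (norm v)\<^sup>2" by (simp add: le_divide_eq)
  qed
  then have "coerc_const a \<le> a v v / (norm v)\<^sup>2"
    unfolding coerc_const_def by (rule cInf_lower[rotated]) (use False in blast)
  with False have "coerc_const a * (norm v)\<^sup>2 \<le> a v v"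
    by (simp add: le_divide_eq)
  moreover have "\<alpha> * (norm v)\<^sup>2 \<le> coerc_const a * (norm v)\<^sup>2"
    using assms(2) by (simp add: mult_right_mono)
  ultimately show ?thesis by linarith
qed

lemma bilinear_le_cont_const:
  fixes a :: "'x::real_normed_vector \<Rightarrow> 'x \<Rightarrow> real"
  assumes "bilinear a" and "bdd_above {a u v / (norm u * norm v) | u v. u \<noteq> 0 \<and> v \<noteq> 0}"
    and "cont_const a \<le> \<gamma>"
  shows "a u v \<le> \<gamma> * (norm u * norm v)"
proof (cases "u = 0 \<or> v = 0")
  case True
  then show ?thesis using bilinear_lzero[OF assms(1)] bilinear_rzero[OF assms(1)] by auto
next
  case False
  then have "a u v / (norm u * norm v) \<le> cont_const a"
    unfolding cont_const_def by (intro cSup_upper[OF _ assms(2)]) blast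
  with False have "a u v \<le> cont_const a * (norm u * norm v)"
    by (simp add: divide_le_eq)
  also have "\<dots> \<le> \<gamma> * (norm u * norm v)"
    using assms(3) by (simp add: mult_right_mono)
  finally show ?thesis .
qed

lemma infsup_const_le_Sup:
  fixes b :: "'x::euclidean_space \<Rightarrow> 'y::euclidean_space \<Rightarrow> real"
  assumes "bilinear b" and "q \<noteq> 0"
  shows "infsup_const b \<le> Sup {b v q / (norm q * norm v) | v. v \<noteq> 0}"
proof -
  let ?S = "\<lambda>q. {b v q / (norm q * norm v) | v. v \<noteq> 0}"
  obtain B where B: "\<And>x y. norm (b x y) \<le> B * norm x * norm y"
    using bilinear_bounded[OF assms(1)] by blast
  have Sup_nonneg: "0 \<le> Sup (?S q')" for q'
  proof -
    have "bdd_above (?S q')"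
    proof (rule bdd_aboveI[of _ "\<bar>B\<bar>"], clarify)
      fix v :: 'x assume "v \<noteq> 0"
      have "b v q' \<le> B * (norm v * norm q')"
        using B[of v q'] by (simp add: abs_le_iff mult.assoc)
      also have "\<dots> \<le> \<bar>B\<bar> * (norm v * norm q')"
        by (simp add: mult_right_mono)
      finally have "b v q' \<le> \<bar>B\<bar> * (norm v * norm q')" .
      with \<open>v \<noteq> 0\<close> show "b v q' / (norm q' * norm v) \<le> \<bar>B\<bar>"
        by (cases "q' = 0") (auto simp: divide_le_eq mult_ac)
    qed
    moreover define w :: 'x where "w = (SOME i. i \<in> Basis)"
    then have "w \<noteq> 0" by (simp add: SOME_Basis nonzero_Basis)
    moreover have "b w q' / (norm q' * norm w) \<in> ?S q'"
      "b (- w) q' / (norm q' * norm (- w)) \<in> ?S q'"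
      using \<open>w \<noteq> 0\<close> by (blast, intro CollectI exI[of _ "- w"], simp)
    ultimately have "b w q' / (norm q' * norm w) \<le> Sup (?S q')"
      "b (- w) q' / (norm q' * norm (- w)) \<le> Sup (?S q')"
      by (auto intro: cSup_upper)
    then show ?thesis using bilinear_lneg[OF assms(1), of w q'] by simp
  qed
  have "bdd_below {Sup (?S q') | q'. q' \<noteq> 0}"
    using Sup_nonneg by (auto intro: bdd_belowI[of _ 0])
  then show ?thesis
    unfolding infsup_const_def by (rule cInf_lower[rotated]) (use assms(2) in blast)
qed

lemma bilinear_inner_representation:
  fixes b :: "'x::euclidean_space \<Rightarrow> 'y::euclidean_space \<Rightarrow> real"
  assumes "bilinear b"
  obtains T where "linear T" and "\<And>v q. b v q = v \<bullet> T q"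
proof -
  define T where "T q = adjoint (\<lambda>v. b v q) 1" for q
  have left_linear: "linear (\<lambda>v. b v q)" and right_linear: "linear (b v)" for v q
    using assms unfolding bilinear_def by blast+
  have bT: "b v q = v \<bullet> T q" for v q
    unfolding T_def adjoint_works[OF left_linear] by simp
  have "linear T"
  proof (rule linearI)
    show "T (x + y) = T x + T y" for x y
      using linear_add[OF right_linear] by (metis bT inner_add_right vector_eq_ldot)
    show "T (c *\<^sub>R x) = c *\<^sub>R T x" for c x
      using linear_scale[OF right_linear] by (metis bT inner_scaleR_right real_scaleR_def vector_eq_ldot)
  qed
  with bT that show ?thesis by blast
qed

lemma infsup_const_le_norm:
  fixes b :: "'x::euclidean_space \<Rightarrow> 'y::euclidean_space \<Rightarrow> real"
  assumes "bilinear b" and bT: "\<And>v q. b v q = v \<bullet> T q"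
  shows "infsup_const b * norm q \<le> norm (T q)"
proof (cases "q = 0")
  case True
  then show ?thesis by simp
next
  case False
  have "Sup {b v q / (norm q * norm v) | v. v \<noteq> 0} \<le> norm (T q) / norm q"
  proof (rule cSup_least)
    show "{b v q / (norm q * norm v) | v. v \<noteq> 0} \<noteq> {}"
      using nonzero_Basis SOME_Basis by blast
    fix x assume "x \<in> {b v q / (norm q * norm v) | v. v \<noteq> 0}"
    then obtain v where "v \<noteq> 0" and x: "x = b v q / (norm q * norm v)" by blast
    have "b v q \<le> norm v * norm (T q)"
      using bT Cauchy_Schwarz_ineq2[of v "T q"] by auto
    with \<open>v \<noteq> 0\<close> False show "x \<le> norm (T q) / norm q"
      unfolding x
      by (simp add: divide_le_eq field_simps)
  qed
  with infsup_const_le_Sup[OF assms(1) False] False show ?thesis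
    by (simp add: le_divide_eq) (meson mult_right_mono norm_ge_zero order_trans)
qed

lemma surj_adjoint_comp:
  fixes T :: "'y::euclidean_space \<Rightarrow> 'x::euclidean_space"
  assumes "linear T" and "inj T"
  shows "surj (\<lambda>q. adjoint T (T q))"
proof -
  have lin: "linear (\<lambda>q. adjoint T (T q))"
    using linear_compose[OF assms(1) adjoint_linear[OF assms(1)]] by (simp add: o_def)
  have "q = 0" if "adjoint T (T q) = 0" for q
  proof -
    have "T q \<bullet> T q = 0" using adjoint_works[OF assms(1), of q "T q"] that by simp
    then show "q = 0" using assms by (simp add: linear_injective_0)
  qed
  then have "inj (\<lambda>q. adjoint T (T q))" by (simp add: linear_injective_0[OF lin])
  then show ?thesis using lin by (simp add: linear_injective_imp_surjective)
qed

lemma infsup_right_inverse: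
  fixes b :: "'x::euclidean_space \<Rightarrow> 'y::euclidean_space \<Rightarrow> real" and r :: "'y \<Rightarrow> real"
  assumes "bilinear b" and "0 < infsup_const b" and "linear r"
  obtains w where "\<And>q. b w q = r q" and "infsup_const b * norm w \<le> dual_norm r"
proof -
  obtain T where T: "linear T" and bT: "\<And>v q. b v q = v \<bullet> T q"
    using bilinear_inner_representation[OF assms(1)] by blast
  have lower: "infsup_const b * norm q \<le> norm (T q)" for q
    using infsup_const_le_norm[OF assms(1) bT] .
  have "inj T"
    unfolding linear_injective_0[OF T]
  proof (intro allI impI)
    fix q assume "T q = 0"
    then have "infsup_const b * norm q \<le> 0" using lower[of q] by simp
    with assms(2) show "q = 0" by (simp add: mult_le_0_iff)
  qed
  obtain q\<^sub>0 where q\<^sub>0: "adjoint T (T q\<^sub>0) = adjoint r 1"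
    using surj_adjoint_comp[OF T \<open>inj T\<close>] by (metis surjD)
  define w where "w = T q\<^sub>0"
  have bw: "b w q = r q" for q
    using adjoint_works[OF T, of q "T q\<^sub>0"] adjoint_works[OF assms(3), of q 1]
    by (simp add: bT w_def q\<^sub>0 inner_commute)
  have "(norm w)\<^sup>2 = r q\<^sub>0"
    using bw[of q\<^sub>0] by (simp add: bT w_def power2_norm_eq_inner)
  also have "\<dots> \<le> dual_norm r * norm q\<^sub>0"
    by (rule dual_norm_upper[OF assms(3)])
  finally have "infsup_const b * (norm w)\<^sup>2 \<le> dual_norm r * (infsup_const b * norm q\<^sub>0)"
    using assms(2) by (simp add: mult_left_mono mult_ac)
  also have "\<dots> \<le> dual_norm r * norm w"
    using lower[of q\<^sub>0] dual_norm_nonneg[OF assms(3)] by (simp add: w_def mult_left_mono)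
  finally have "infsup_const b * norm w \<le> dual_norm r"
    using dual_norm_nonneg[OF assms(3)]
    by (cases "w = 0") (auto simp: power2_eq_square mult_le_cancel_right)
  with bw that show ?thesis by blast
qed

locale stable_saddle_point_forms =
  fixes m a :: "'x::euclidean_space \<Rightarrow> 'x \<Rightarrow> real"
    and b :: "'x \<Rightarrow> 'y::euclidean_space \<Rightarrow> real"
    and \<alpha> \<beta> \<gamma>\<^sub>m \<gamma>\<^sub>a :: real
  assumes m_bilinear: "bilinear m" and m_sym: "m u v = m v u" and m_nonneg: "0 \<le> m v v"
    and m_bounded: "m v v \<le> \<gamma>\<^sub>m * (norm v)\<^sup>2"
    and a_bilinear: "bilinear a" and a_sym: "a u v = a v u"
    and a_coercive: "\<alpha> * (norm v)\<^sup>2 \<le> a v v" and a_bounded: "a v v \<le> \<gamma>\<^sub>a * (norm v)\<^sup>2"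
    and b_bilinear: "bilinear b" and inf_sup: "\<beta> \<le> infsup_const b"
    and \<alpha>_pos: "0 < \<alpha>" and \<beta>_pos: "0 < \<beta>"
    and \<gamma>\<^sub>m_nonneg: "0 \<le> \<gamma>\<^sub>m" and \<gamma>\<^sub>a_nonneg: "0 \<le> \<gamma>\<^sub>a"
begin

lemma m_energy_difference: "m e e - m e' e' - m w w \<le> 2 * m (e - e') (e - w)"
proof -
  have "0 \<le> m (e - e' - w) (e - e' - w)" by (rule m_nonneg)
  then show ?thesis
    using m_sym[of e' e] m_sym[of w e] m_sym[of w e']
    by (simp add: bilinear_lsub[OF m_bilinear] bilinear_rsub[OF m_bilinear]
        bilinear_ladd[OF m_bilinear] bilinear_radd[OF m_bilinear] algebra_simps)
qed

lemma a_polarization: "2 * a e (e - w) = a e e + a (e - w) (e - w) - a w w"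
  using a_sym[of w e] by (simp add: bilinear_lsub[OF a_bilinear] bilinear_rsub[OF a_bilinear])

lemma tested_energy_inequality:
  assumes "0 < dt" and "linear r"
    and tested: "r (e - w) = (1 / dt) * m (e - e') (e - w) + a e (e - w)"
  shows "m e e - m e' e' + dt * a e e \<le> m w w + dt * a w w + dt * ((dual_norm r)\<^sup>2 / \<alpha>)"
proof -
  define d where "d = dual_norm r"
  define x where "x = norm (e - w)"
  have "0 \<le> (\<alpha> * x - d)\<^sup>2 / \<alpha>" using \<alpha>_pos by simp
  also have "\<dots> = \<alpha> * x\<^sup>2 + d\<^sup>2 / \<alpha> - 2 * (d * x)"
    using \<alpha>_pos by (simp add: power2_eq_square field_simps)
  finally have young: "2 * (d * x) \<le> \<alpha> * x\<^sup>2 + d\<^sup>2 / \<alpha>" by simp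
  have "r (e - w) \<le> d * x"
    unfolding d_def x_def by (rule dual_norm_upper[OF assms(2)])
  with young a_coercive[of "e - w"] have "2 * r (e - w) \<le> a (e - w) (e - w) + d\<^sup>2 / \<alpha>"
    unfolding x_def by linarith
  then have "2 * m (e - e') (e - w) + dt * (2 * a e (e - w)) \<le> dt * (a (e - w) (e - w) + d\<^sup>2 / \<alpha>)"
    using tested \<open>0 < dt\<close> by (simp add: field_simps mult_left_mono)
  then show ?thesis
    using m_energy_difference[of e e' w] a_polarization[of e w] unfolding d_def
    by (simp add: algebra_simps)
qed

lemma error_energy_step:
  assumes "0 < dt"
    and "linear r\<^sub>1" "\<And>v. r\<^sub>1 v = (1 / dt) * m (e - e') v + a e v + b v \<pi>"
    and "linear r\<^sub>2" "\<And>q. r\<^sub>2 q = b e q"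
  shows "m e e - m e' e' + dt * a e e
    \<le> dt * ((dual_norm r\<^sub>1)\<^sup>2 / \<alpha>) + (\<gamma>\<^sub>m + dt * \<gamma>\<^sub>a) * ((dual_norm r\<^sub>2)\<^sup>2 / \<beta>\<^sup>2)"
proof -
  obtain w where bw: "\<And>q. b w q = r\<^sub>2 q" and w_norm: "infsup_const b * norm w \<le> dual_norm r\<^sub>2"
    using infsup_right_inverse[OF b_bilinear _ assms(4)] inf_sup \<beta>_pos by force
  \<comment> \<open>Testing with e - w, which satisfies the constraint, eliminates the pressure error.\<close>
  have "b (e - w) \<pi> = 0"
    using assms(5) bw by (simp add: bilinear_lsub[OF b_bilinear])
  then have "r\<^sub>1 (e - w) = (1 / dt) * m (e - e') (e - w) + a e (e - w)"
    using assms(3) by simp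
  from tested_energy_inequality[OF assms(1,2) this]
  have "m e e - m e' e' + dt * a e e \<le> m w w + dt * a w w + dt * ((dual_norm r\<^sub>1)\<^sup>2 / \<alpha>)" .
  moreover have "m w w + dt * a w w \<le> (\<gamma>\<^sub>m + dt * \<gamma>\<^sub>a) * (norm w)\<^sup>2"
  proof -
    have "dt * a w w \<le> dt * (\<gamma>\<^sub>a * (norm w)\<^sup>2)"
      using a_bounded[of w] \<open>0 < dt\<close> by (simp add: mult_left_mono)
    with m_bounded[of w] show ?thesis by (simp add: algebra_simps)
  qed
  moreover have "(norm w)\<^sup>2 \<le> (dual_norm r\<^sub>2)\<^sup>2 / \<beta>\<^sup>2"
  proof -
    have "\<beta> * norm w \<le> dual_norm r\<^sub>2"
      using w_norm inf_sup by (meson mult_right_mono norm_ge_zero order_trans)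
    then have "(\<beta> * norm w)\<^sup>2 \<le> (dual_norm r\<^sub>2)\<^sup>2"
      using \<beta>_pos by (simp add: power_mono)
    with \<beta>_pos show ?thesis by (simp add: le_divide_eq power_mult_distrib mult.commute)
  qed
  then have "(\<gamma>\<^sub>m + dt * \<gamma>\<^sub>a) * (norm w)\<^sup>2 \<le> (\<gamma>\<^sub>m + dt * \<gamma>\<^sub>a) * ((dual_norm r\<^sub>2)\<^sup>2 / \<beta>\<^sup>2)"
    using \<gamma>\<^sub>m_nonneg \<gamma>\<^sub>a_nonneg \<open>0 < dt\<close> by (intro mult_left_mono) auto
  ultimately show ?thesis by linarith
qed

lemma linear_residuals:
  assumes "linear f" and "linear g"
  shows "linear (\<lambda>v. f v - c * m w v - a z v - b v s)" and "linear (\<lambda>q. g q - b z q)"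
proof -
  have "linear (m w)" "linear (a z)" "linear (\<lambda>v. b v s)" "linear (b z)"
    using m_bilinear a_bilinear b_bilinear unfolding bilinear_def by blast+
  then show "linear (\<lambda>v. f v - c * m w v - a z v - b v s)" "linear (\<lambda>q. g q - b z q)"
    using assms linear_compose_scale_right[of "m w" c]
    by (auto intro!: linear_compose_sub)
qed

lemma residual_energy_step:
  fixes f :: "'x \<Rightarrow> real" and g :: "'y \<Rightarrow> real"
  assumes "0 < dt" and "linear f" and "linear g"
    and truth: "\<And>v. (1 / dt) * m (u - u') v + a u v + b v p = f v" "\<And>q. b u q = g q"
  shows "m (u - uN) (u - uN) - m (u' - uN') (u' - uN') + dt * a (u - uN) (u - uN)
    \<le> dt * ((dual_norm (\<lambda>v. f v - (1 / dt) * m (uN - uN') v - a uN v - b v pN))\<^sup>2 / \<alpha>)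
      + (\<gamma>\<^sub>m + dt * \<gamma>\<^sub>a) * ((dual_norm (\<lambda>q. g q - b uN q))\<^sup>2 / \<beta>\<^sup>2)"
proof (rule error_energy_step[OF \<open>0 < dt\<close>])
  show "linear (\<lambda>v. f v - (1 / dt) * m (uN - uN') v - a uN v - b v pN)"
    "linear (\<lambda>q. g q - b uN q)"
    using linear_residuals assms(2,3) by blast+
  show "f v - (1 / dt) * m (uN - uN') v - a uN v - b v pN
      = (1 / dt) * m (u - uN - (u' - uN')) v + a (u - uN) v + b v (p - pN)" for v
    using truth(1)[of v]
    by (simp add: bilinear_lsub[OF m_bilinear] bilinear_ladd[OF m_bilinear]
        bilinear_lsub[OF a_bilinear] bilinear_rsub[OF b_bilinear] add_divide_distrib algebra_simps)
  show "g q - b uN q = b (u - uN) q" for q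
    using truth(2)[of q] by (simp add: bilinear_lsub[OF b_bilinear])
qed

lemma residual_estimator_step:
  fixes f :: "'x \<Rightarrow> real" and g :: "'y \<Rightarrow> real"
    and u u' uN uN' :: 'x and p pN :: 'y
  assumes "0 < dt" and "linear f" and "linear g"
    and truth: "\<And>v. (1 / dt) * m (u - u') v + a u v + b v p = f v" "\<And>q. b u q = g q"
  defines "r\<^sub>1 \<equiv> \<lambda>v. f v - (1 / dt) * m (uN - uN') v - a uN v - b v pN"
    and "r\<^sub>2 \<equiv> \<lambda>q. g q - b uN q"
  shows "m (u - uN) (u - uN) - m (u' - uN') (u' - uN') + dt * a (u - uN) (u - uN)
    \<le> dt * ((dual_norm r\<^sub>1)\<^sup>2 / \<alpha> + 2 / \<beta> * (1 + sqrt (\<gamma>\<^sub>a / \<alpha>)) * dual_norm r\<^sub>1 * dual_norm r\<^sub>2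
      + (\<gamma>\<^sub>m / dt + \<gamma>\<^sub>a) * (dual_norm r\<^sub>2)\<^sup>2 / \<beta>\<^sup>2)"
proof -
  have "0 \<le> dual_norm r\<^sub>1" "0 \<le> dual_norm r\<^sub>2"
    unfolding r\<^sub>1_def r\<^sub>2_def using linear_residuals[OF assms(2,3)] by (blast intro: dual_norm_nonneg)+
  moreover have "0 \<le> 2 / \<beta> * (1 + sqrt (\<gamma>\<^sub>a / \<alpha>))"
    using \<beta>_pos \<gamma>\<^sub>a_nonneg \<alpha>_pos by simp
  ultimately have "0 \<le> dt * (2 / \<beta> * (1 + sqrt (\<gamma>\<^sub>a / \<alpha>)) * dual_norm r\<^sub>1 * dual_norm r\<^sub>2)"
    using \<open>0 < dt\<close> by (simp only: mult_nonneg_nonneg less_imp_le)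
  moreover have "dt * ((dual_norm r\<^sub>1)\<^sup>2 / \<alpha> + 2 / \<beta> * (1 + sqrt (\<gamma>\<^sub>a / \<alpha>)) * dual_norm r\<^sub>1 * dual_norm r\<^sub>2
      + (\<gamma>\<^sub>m / dt + \<gamma>\<^sub>a) * (dual_norm r\<^sub>2)\<^sup>2 / \<beta>\<^sup>2)
    = dt * ((dual_norm r\<^sub>1)\<^sup>2 / \<alpha>) + dt * (2 / \<beta> * (1 + sqrt (\<gamma>\<^sub>a / \<alpha>)) * dual_norm r\<^sub>1 * dual_norm r\<^sub>2)
      + (\<gamma>\<^sub>m + dt * \<gamma>\<^sub>a) * ((dual_norm r\<^sub>2)\<^sup>2 / \<beta>\<^sup>2)"
    using \<open>0 < dt\<close> by (simp add: ring_distribs)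
  ultimately show ?thesis
    using residual_energy_step[OF assms(1-5), of uN uN' pN] unfolding r\<^sub>1_def r\<^sub>2_def by linarith
qed

end

lemma stable_saddle_point_formsI:
  fixes m a :: "'x::euclidean_space \<Rightarrow> 'x \<Rightarrow> real" and b :: "'x \<Rightarrow> 'y::euclidean_space \<Rightarrow> real"
  assumes "bilinear m" and "\<And>u v. m u v = m v u" and "\<And>v. v \<noteq> 0 \<Longrightarrow> 0 < m v v"
    and "bdd_above {m u v / (norm u * norm v) | u v. u \<noteq> 0 \<and> v \<noteq> 0}" and "cont_const m \<le> \<gamma>\<^sub>m"
    and "bilinear a" and "\<And>u v. a u v = a v u"
    and "bdd_above {a u v / (norm u * norm v) | u v. u \<noteq> 0 \<and> v \<noteq> 0}" and "cont_const a \<le> \<gamma>\<^sub>a"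
    and "\<alpha> \<le> coerc_const a" and "bilinear b" and "\<beta> \<le> infsup_const b"
    and "0 < \<alpha>" and "0 < \<beta>" and "0 \<le> \<gamma>\<^sub>m" and "0 \<le> \<gamma>\<^sub>a"
  shows "stable_saddle_point_forms m a b \<alpha> \<beta> \<gamma>\<^sub>m \<gamma>\<^sub>a"
proof
  fix v :: 'x
  show "0 \<le> m v v"
    using assms(3)[of v] bilinear_lzero[OF assms(1)] by (cases "v = 0") auto
  show "m v v \<le> \<gamma>\<^sub>m * (norm v)\<^sup>2"
    using bilinear_le_cont_const[OF assms(1,4,5), of v v] by (simp add: power2_eq_square)
  show "a v v \<le> \<gamma>\<^sub>a * (norm v)\<^sup>2"
    using bilinear_le_cont_const[OF assms(6,8,9), of v v] by (simp add: power2_eq_square)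
  show "\<alpha> * (norm v)\<^sup>2 \<le> a v v"
    by (rule coerc_const_le[OF assms(6,10)])
qed (use assms in blast)+

lemma sum_increments_le:
  fixes E c s :: "nat \<Rightarrow> 'a::ordered_ab_group_add"
  assumes "E 0 = 0" and "\<And>j. j \<in> {1..k} \<Longrightarrow> E j - E (j - 1) + c j \<le> s j"
  shows "E k + (\<Sum>j = 1..k. c j) \<le> (\<Sum>j = 1..k. s j)"
  using assms(2)
proof (induction k)
  case 0
  then show ?case using assms(1) by simp
next
  case (Suc k)
  then have "E k + (\<Sum>j = 1..k. c j) \<le> (\<Sum>j = 1..k. s j)"
    and "E (Suc k) - E k + c (Suc k) \<le> s (Suc k)"
    using Suc.prems[of "Suc k"] by auto
  from add_mono[OF this] show ?case by (simp add: sum.cl_ivl_Suc algebra_simps)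
qed

theorem proposition2p2:
  fixes D :: "(real^'n) set"
    and m a :: "real^'n \<Rightarrow> 'x::euclidean_space \<Rightarrow> 'x \<Rightarrow> real"
    and b :: "real^'n \<Rightarrow> 'x \<Rightarrow> 'y::euclidean_space \<Rightarrow> real"
    and f :: "nat \<Rightarrow> real^'n \<Rightarrow> 'x \<Rightarrow> real"
    and g :: "nat \<Rightarrow> real^'n \<Rightarrow> 'y \<Rightarrow> real"
    and K :: nat and dt :: real
    and u :: "real^'n \<Rightarrow> nat \<Rightarrow> 'x" and p :: "real^'n \<Rightarrow> nat \<Rightarrow> 'y"
    and Nmax :: nat
    and XN :: "nat \<Rightarrow> 'x set" and YN :: "nat \<Rightarrow> 'y set"
    and uN :: "nat \<Rightarrow> real^'n \<Rightarrow> nat \<Rightarrow> 'x" and pN :: "nat \<Rightarrow> real^'n \<Rightarrow> nat \<Rightarrow> 'y"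
    and \<mu> :: "real^'n" and N k :: nat
    and alphaLB gammaaUB betaLB gammamUB :: real
  assumes m_bil: "\<And>\<mu>. \<mu> \<in> D \<Longrightarrow> bilinear (m \<mu>)"
    and m_sym: "\<And>\<mu> u v. \<mu> \<in> D \<Longrightarrow> m \<mu> u v = m \<mu> v u"
    and m_pos: "\<And>\<mu> v. \<mu> \<in> D \<Longrightarrow> v \<noteq> 0 \<Longrightarrow> m \<mu> v v > 0"
    and a_bil: "\<And>\<mu>. \<mu> \<in> D \<Longrightarrow> bilinear (a \<mu>)"
    and a_sym: "\<And>\<mu> u v. \<mu> \<in> D \<Longrightarrow> a \<mu> u v = a \<mu> v u"
    and b_bil: "\<And>\<mu>. \<mu> \<in> D \<Longrightarrow> bilinear (b \<mu>)"
    and gm_fin: "\<And>\<mu>. \<mu> \<in> D \<Longrightarrow> bdd_above {m \<mu> u v / (norm u * norm v) | u v. u \<noteq> 0 \<and> v \<noteq> 0}"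
    and ga_fin: "\<And>\<mu>. \<mu> \<in> D \<Longrightarrow> bdd_above {a \<mu> u v / (norm u * norm v) | u v. u \<noteq> 0 \<and> v \<noteq> 0}"
    and alpha_pos: "\<And>\<mu>. \<mu> \<in> D \<Longrightarrow> coerc_const (a \<mu>) > 0"
    and beta_pos: "\<And>\<mu>. \<mu> \<in> D \<Longrightarrow> infsup_const (b \<mu>) > 0"
    and dt_pos: "dt > 0"
    and f_lin: "\<And>k \<mu>. k \<in> {1..K} \<Longrightarrow> \<mu> \<in> D \<Longrightarrow> linear (f k \<mu>)"
    and g_lin: "\<And>k \<mu>. k \<in> {1..K} \<Longrightarrow> \<mu> \<in> D \<Longrightarrow> linear (g k \<mu>)"
    and u0: "\<And>\<mu>. \<mu> \<in> D \<Longrightarrow> u \<mu> 0 = 0"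
    and u_eq1: "\<And>\<mu> k v. \<mu> \<in> D \<Longrightarrow> k \<in> {1..K} \<Longrightarrow>
        (1 / dt) * m \<mu> (u \<mu> k - u \<mu> (k - 1)) v + a \<mu> (u \<mu> k) v + b \<mu> v (p \<mu> k) = f k \<mu> v"
    and u_eq2: "\<And>\<mu> k q. \<mu> \<in> D \<Longrightarrow> k \<in> {1..K} \<Longrightarrow> b \<mu> (u \<mu> k) q = g k \<mu> q"
    and XN_sub: "\<And>N. N \<in> {1..Nmax} \<Longrightarrow> subspace (XN N)"
    and YN_sub: "\<And>N. N \<in> {1..Nmax} \<Longrightarrow> subspace (YN N)"
    and uN_in: "\<And>N \<mu> k. N \<in> {1..Nmax} \<Longrightarrow> \<mu> \<in> D \<Longrightarrow> k \<in> {1..K} \<Longrightarrow> uN N \<mu> k \<in> XN N"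
    and pN_in: "\<And>N \<mu> k. N \<in> {1..Nmax} \<Longrightarrow> \<mu> \<in> D \<Longrightarrow> k \<in> {1..K} \<Longrightarrow> pN N \<mu> k \<in> YN N"
    and uN0: "\<And>N \<mu>. N \<in> {1..Nmax} \<Longrightarrow> \<mu> \<in> D \<Longrightarrow> uN N \<mu> 0 = 0"
    and uN_eq1: "\<And>N \<mu> k v. N \<in> {1..Nmax} \<Longrightarrow> \<mu> \<in> D \<Longrightarrow> k \<in> {1..K} \<Longrightarrow> v \<in> XN N \<Longrightarrow>
        (1 / dt) * m \<mu> (uN N \<mu> k - uN N \<mu> (k - 1)) v + a \<mu> (uN N \<mu> k) v + b \<mu> v (pN N \<mu> k)
          = f k \<mu> v"
    and uN_eq2: "\<And>N \<mu> k q. N \<in> {1..Nmax} \<Longrightarrow> \<mu> \<in> D \<Longrightarrow> k \<in> {1..K} \<Longrightarrow> q \<in> YN N \<Longrightarrow>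
        b \<mu> (uN N \<mu> k) q = g k \<mu> q"
    and mu_in: "\<mu> \<in> D" and N_in: "N \<in> {1..Nmax}" and k_in: "k \<in> {1..K}"
    and alphaLB_pos: "alphaLB > 0" and gammaaUB_pos: "gammaaUB > 0"
    and betaLB_pos: "betaLB > 0" and gammamUB_pos: "gammamUB > 0"
    and alphaLB_le: "alphaLB \<le> coerc_const (a \<mu>)"
    and gammaaUB_ge: "cont_const (a \<mu>) \<le> gammaaUB"
    and betaLB_le: "betaLB \<le> infsup_const (b \<mu>)"
    and gammamUB_ge: "cont_const (m \<mu>) \<le> gammamUB"
  shows "(let r1 = (\<lambda>j v. f j \<mu> v - (1 / dt) * m \<mu> (uN N \<mu> j - uN N \<mu> (j - 1)) v
                         - a \<mu> (uN N \<mu> j) v - b \<mu> v (pN N \<mu> j));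
              r2 = (\<lambda>j q. g j \<mu> q - b \<mu> (uN N \<mu> j) q);
              e = (\<lambda>j. u \<mu> j - uN N \<mu> j);
              Delta = sqrt (dt * (\<Sum>j = 1..k.
                   (dual_norm (r1 j))\<^sup>2 / alphaLB
                 + 2 / betaLB * (1 + sqrt (gammaaUB / alphaLB)) * dual_norm (r1 j) * dual_norm (r2 j)
                 + (gammamUB / dt + gammaaUB) * (dual_norm (r2 j))\<^sup>2 / betaLB\<^sup>2))
          in sqrt (m \<mu> (e k) (e k) + dt * (\<Sum>j = 1..k. a \<mu> (e j) (e j))) \<le> Delta)"
proof -
  define r1 where "r1 = (\<lambda>j v. f j \<mu> v - (1 / dt) * m \<mu> (uN N \<mu> j - uN N \<mu> (j - 1)) v
                         - a \<mu> (uN N \<mu> j) v - b \<mu> v (pN N \<mu> j))"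
  define r2 where "r2 = (\<lambda>j q. g j \<mu> q - b \<mu> (uN N \<mu> j) q)"
  define e where "e = (\<lambda>j. u \<mu> j - uN N \<mu> j)"
  define S where "S = (\<lambda>j. (dual_norm (r1 j))\<^sup>2 / alphaLB
                 + 2 / betaLB * (1 + sqrt (gammaaUB / alphaLB)) * dual_norm (r1 j) * dual_norm (r2 j)
                 + (gammamUB / dt + gammaaUB) * (dual_norm (r2 j))\<^sup>2 / betaLB\<^sup>2)"
  interpret stable_saddle_point_forms "m \<mu>" "a \<mu>" "b \<mu>" alphaLB betaLB gammamUB gammaaUB
    using mu_in m_bil m_sym m_pos gm_fin gammamUB_ge a_bil a_sym ga_fin gammaaUB_ge alphaLB_le
      b_bil betaLB_le alphaLB_pos betaLB_pos gammamUB_pos gammaaUB_pos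
    by (intro stable_saddle_point_formsI) auto
  have step: "m \<mu> (e j) (e j) - m \<mu> (e (j - 1)) (e (j - 1)) + dt * a \<mu> (e j) (e j) \<le> dt * S j"
    if "j \<in> {1..k}" for j
  proof -
    have jK: "j \<in> {1..K}" using that k_in by auto
    show ?thesis
      using residual_estimator_step[OF dt_pos f_lin[OF jK mu_in] g_lin[OF jK mu_in]
          u_eq1[OF mu_in jK] u_eq2[OF mu_in jK], of "uN N \<mu> j" "uN N \<mu> (j - 1)" "pN N \<mu> j"]
      unfolding e_def r1_def r2_def S_def .
  qed
  have "e 0 = 0"
    unfolding e_def using u0[OF mu_in] uN0[OF N_in mu_in] by simp
  then have "m \<mu> (e k) (e k) + (\<Sum>j = 1..k. dt * a \<mu> (e j) (e j)) \<le> (\<Sum>j = 1..k. dt * S j)"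
    using step bilinear_lzero[OF m_bilinear]
    by (intro sum_increments_le[where E = "\<lambda>j. m \<mu> (e j) (e j)"]) auto
  then show ?thesis
    unfolding Let_def r1_def r2_def e_def S_def by (simp add: sum_distrib_left)
qed

end
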